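(* Let $R$ be a t-unital ring and $f\colon L\to M$ a morphism of left $R$-modules whose kernel and cokernel are null-modules. Then (a) the morphism $R\otimes_R f\colon R\otimes_R L\to R\otimes_R M$ is an isomorphism; (b) the morphism $\mathrm{Hom}_R(R,f)\colon \mathrm{Hom}_R(R,L)\to\mathrm{Hom}_R(R,M)$ is an isomorphism.
   Context: Rings are associative, not necessarily unital; modules are not assumed unital. $R$ is t-unital if the multiplication map $R\otimes_R R\to R$ is an isomorphism. A left $R$-module $N$ is a null-module if $rn=0$ for all $r\in R$, $n\in N$. $\mathrm{Hom}_R$ denotes left $R$-module homomorphisms; $\mathrm{Hom}_R(R,L)$ is a left $R$-module via the right action of $R$ on itself. *)

theory Defs
  imports Main "HOL-Library.Poly_Mapping"
begin

text \<open>Rings are associative, not necessarily unital: type class ring (no 1).\<close>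

definition lmod :: "('r::ring \<Rightarrow> 'm::ab_group_add \<Rightarrow> 'm) \<Rightarrow> bool" where
  "lmod smul \<longleftrightarrow>
     (\<forall>r s x. smul (r + s) x = smul r x + smul s x) \<and>
     (\<forall>r x y. smul r (x + y) = smul r x + smul r y) \<and>
     (\<forall>r s x. smul (r * s) x = smul r (smul s x))"

definition lmod_hom ::
  "('r::ring \<Rightarrow> 'm::ab_group_add \<Rightarrow> 'm) \<Rightarrow> ('r \<Rightarrow> 'n::ab_group_add \<Rightarrow> 'n) \<Rightarrow> ('m \<Rightarrow> 'n) \<Rightarrow> bool" where
  "lmod_hom smul smul' f \<longleftrightarrow>
     (\<forall>x y. f (x + y) = f x + f y) \<and> (\<forall>r x. f (smul r x) = smul' r (f x))"

definition kernel_null :: "('r::ring \<Rightarrow> 'm::ab_group_add \<Rightarrow> 'm) \<Rightarrow> ('m \<Rightarrow> 'n::ab_group_add) \<Rightarrow> bool" where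
  "kernel_null smul f \<longleftrightarrow> (\<forall>r x. f x = 0 \<longrightarrow> smul r x = 0)"

definition cokernel_null :: "('r::ring \<Rightarrow> 'n::ab_group_add \<Rightarrow> 'n) \<Rightarrow> ('m \<Rightarrow> 'n) \<Rightarrow> bool" where
  "cokernel_null smul' f \<longleftrightarrow> (\<forall>r y. smul' r y \<in> range f)"

text \<open>Tensor product R \<otimes>_R L: the free abelian group on R \<times> L (finitely supported
  integer-valued functions) modulo the subgroup generated by the balanced-bilinearity relations.\<close>

inductive_set tensor_rel :: "('r::ring \<Rightarrow> 'm::ab_group_add \<Rightarrow> 'm) \<Rightarrow> (('r \<times> 'm) \<Rightarrow>\<^sub>0 int) set"
  for smul where
  zero: "0 \<in> tensor_rel smul"
| diff: "a \<in> tensor_rel smul \<Longrightarrow> b \<in> tensor_rel smul \<Longrightarrow> a - b \<in> tensor_rel smul"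
| add_left: "Poly_Mapping.single (r + s, x) 1 - Poly_Mapping.single (r, x) 1
               - Poly_Mapping.single (s, x) 1 \<in> tensor_rel smul"
| add_right: "Poly_Mapping.single (r, x + y) 1 - Poly_Mapping.single (r, x) 1
               - Poly_Mapping.single (r, y) 1 \<in> tensor_rel smul"
| balanced: "Poly_Mapping.single (r * s, x) 1 - Poly_Mapping.single (r, smul s x) 1
               \<in> tensor_rel smul"

definition tensor_cls :: "('r::ring \<Rightarrow> 'm::ab_group_add \<Rightarrow> 'm) \<Rightarrow> (('r \<times> 'm) \<Rightarrow>\<^sub>0 int)
    \<Rightarrow> (('r \<times> 'm) \<Rightarrow>\<^sub>0 int) set" where
  "tensor_cls smul u = {v. v - u \<in> tensor_rel smul}"

definition tensor :: "('r::ring \<Rightarrow> 'm::ab_group_add \<Rightarrow> 'm) \<Rightarrow> (('r \<times> 'm) \<Rightarrow>\<^sub>0 int) set set" where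
  "tensor smul = range (tensor_cls smul)"

definition free_map :: "('m \<Rightarrow> 'n) \<Rightarrow> (('r \<times> 'm) \<Rightarrow>\<^sub>0 int) \<Rightarrow> (('r \<times> 'n) \<Rightarrow>\<^sub>0 int)" where
  "free_map f u = (\<Sum>p\<in>Poly_Mapping.keys u. Poly_Mapping.single (fst p, f (snd p)) (Poly_Mapping.lookup u p))"

definition tensor_map :: "('r::ring \<Rightarrow> 'n::ab_group_add \<Rightarrow> 'n) \<Rightarrow> ('m::ab_group_add \<Rightarrow> 'n)
    \<Rightarrow> (('r \<times> 'm) \<Rightarrow>\<^sub>0 int) set \<Rightarrow> (('r \<times> 'n) \<Rightarrow>\<^sub>0 int) set" where
  "tensor_map smul' f C = tensor_cls smul' (free_map f (SOME u. u \<in> C))"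

definition zmult :: "int \<Rightarrow> 'a::ab_group_add \<Rightarrow> 'a" where
  "zmult n x = (if 0 \<le> n then (\<Sum>_\<in>{..<nat n}. x) else - (\<Sum>_\<in>{..<nat (- n)}. x))"

definition mult_map :: "(('r::ring \<times> 'r) \<Rightarrow>\<^sub>0 int) set \<Rightarrow> 'r" where
  "mult_map C = (let u = (SOME u. u \<in> C) in (\<Sum>p\<in>Poly_Mapping.keys u. zmult (Poly_Mapping.lookup u p) (fst p * snd p)))"

definition t_unital :: "'r::ring itself \<Rightarrow> bool" where
  "t_unital _ \<longleftrightarrow> bij_betw (mult_map :: (('r \<times> 'r) \<Rightarrow>\<^sub>0 int) set \<Rightarrow> 'r)
                      (tensor ((*) :: 'r \<Rightarrow> 'r \<Rightarrow> 'r)) UNIV"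

definition hom_R :: "('r::ring \<Rightarrow> 'm::ab_group_add \<Rightarrow> 'm) \<Rightarrow> ('r \<Rightarrow> 'm) set" where
  "hom_R smul = {g. lmod_hom (*) smul g}"

end

theory Submission
  imports Defs HOL.Modules
begin

(* Since R is t-unital, every r is a sum r = \<Sum>i. a_i b_i, and this factorization is unique
   up to the balanced relations of R \<otimes>_R R. Hence r \<otimes> x = \<Sum>i. a_i \<otimes> b_i x in R \<otimes>_R L and
   g r = \<Sum>i. a_i g(b_i) for g \<in> Hom_R(R, L), so both functors only see elements of the form b x.
   In M such elements lift along f because the cokernel of f is null, and the lift is unique up
   to an element of the kernel, which every b kills because the kernel is null. Therefore
   r \<otimes> y \<mapsto> \<Sum>i. a_i \<otimes> lift (b_i y) and g \<mapsto> (r \<mapsto> \<Sum>i. a_i lift (g b_i)) are well defined,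
   and they invert R \<otimes>_R f and Hom_R(R, f). *)

section \<open>Linear extension along free abelian groups\<close>

lemma sum_const_lessThan_add:
  "(\<Sum>_\<in>{..<m + n :: nat}. x)
    = (\<Sum>_\<in>{..<m}. x) + (\<Sum>_\<in>{..<n}. x :: 'a::comm_monoid_add)"
  by (induction n) (simp_all add: add.assoc)

lemma zmult_eq_diff: "zmult n x = (\<Sum>_\<in>{..<nat n}. x) - (\<Sum>_\<in>{..<nat (- n)}. x)"
  by (simp add: zmult_def)

lemma zmult_add_left: "zmult (a + b) x = zmult a x + zmult b x"
proof -
  have "nat (a + b) + nat (- a) + nat (- b) = nat a + nat b + nat (- (a + b))"
    by arith
  then have "(\<Sum>_\<in>{..<nat (a + b)}. x) + (\<Sum>_\<in>{..<nat (- a)}. x)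
        + (\<Sum>_\<in>{..<nat (- b)}. x)
      = (\<Sum>_\<in>{..<nat a}. x) + (\<Sum>_\<in>{..<nat b}. x)
        + (\<Sum>_\<in>{..<nat (- (a + b))}. x)"
    by (metis sum_const_lessThan_add)
  then show ?thesis
    unfolding zmult_eq_diff by (simp add: algebra_simps)
qed

lemma zmult_diff_left: "zmult (a - b) x = zmult a x - zmult b x"
  using zmult_add_left[of "a - b" b x] by (simp add: eq_diff_eq)

lemma zmult_0_left [simp]: "zmult 0 x = 0"
  and zmult_1_left [simp]: "zmult 1 x = x"
  by (simp_all add: zmult_def)

definition frag_lin :: "('p \<Rightarrow> 'a::ab_group_add) \<Rightarrow> ('p \<Rightarrow>\<^sub>0 int) \<Rightarrow> 'a" where
  "frag_lin g u = (\<Sum>p\<in>Poly_Mapping.keys u. zmult (Poly_Mapping.lookup u p) (g p))"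

lemma frag_lin_0 [simp]: "frag_lin g 0 = 0"
  by (simp add: frag_lin_def)

lemma frag_lin_of [simp]: "frag_lin g (frag_of p) = g p"
  by (simp add: frag_lin_def keys_frag_of)

lemma frag_lin_diff [simp]: "frag_lin g (u - v) = frag_lin g u - frag_lin g v"
proof -
  let ?K = "Poly_Mapping.keys u \<union> Poly_Mapping.keys v"
  have expand: "frag_lin g w = (\<Sum>p\<in>?K. zmult (Poly_Mapping.lookup w p) (g p))"
    if "Poly_Mapping.keys w \<subseteq> ?K" for w
    unfolding frag_lin_def
    by (rule sum.mono_neutral_left) (use that in \<open>auto simp: in_keys_iff\<close>)
  have "frag_lin g (u - v) = (\<Sum>p\<in>?K. zmult (Poly_Mapping.lookup (u - v) p) (g p))"
    by (rule expand) (auto simp: keys_diff)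
  also have "\<dots> = frag_lin g u - frag_lin g v"
    by (simp add: lookup_minus zmult_diff_left sum_subtractf expand)
  finally show ?thesis .
qed

lemma additive_frag_lin: "additive (frag_lin g)"
proof
  fix u v
  show "frag_lin g (u + v) = frag_lin g u + frag_lin g v"
    using frag_lin_diff[of g u "- v"] frag_lin_diff[of g 0 v] by simp
qed

lemma frag_lin_add [simp]: "frag_lin g (u + v) = frag_lin g u + frag_lin g v"
  by (rule additive.add[OF additive_frag_lin])

lemma additive_comp_frag_lin:
  assumes "additive h"
  shows "h (frag_lin g u) = frag_lin (\<lambda>p. h (g p)) u"
  using subset_UNIV
proof (induction u rule: frag_induction)
  case zero show ?case by (simp add: additive.zero[OF assms])
next
  case (diff a b) then show ?case by (simp add: additive.diff[OF assms])
qed simp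

lemma frag_lin_in_range:
  assumes "additive f"
  shows "frag_lin (\<lambda>p. f (h p)) u \<in> range f"
  using additive_comp_frag_lin[of f h u] assms by (metis rangeI)

definition frag_map :: "('a \<Rightarrow> 'b) \<Rightarrow> ('a \<Rightarrow>\<^sub>0 int) \<Rightarrow> ('b \<Rightarrow>\<^sub>0 int)" where
  "frag_map h = frag_extend (frag_of \<circ> h)"

lemma frag_map_diff: "frag_map h (u - v) = frag_map h u - frag_map h v"
  by (simp add: frag_map_def frag_extend_diff)

lemma frag_extend_add_fun:
  "frag_extend (\<lambda>p. g p + h p) w = frag_extend g w + frag_extend h w"
  by (simp add: frag_extend_def frag_cmul_distrib2 sum.distrib)

lemma frag_extend_frag_extend:
  "frag_extend h (frag_extend g w) = frag_extend (\<lambda>p. frag_extend h (g p)) w"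
  using subset_UNIV
  by (induction w rule: frag_induction) (simp_all add: frag_extend_diff)

lemma frag_extend_frag_map: "frag_extend g (frag_map h u) = frag_extend (g \<circ> h) u"
  by (simp add: frag_map_def frag_extend_compose)

lemma frag_lin_frag_map: "frag_lin g (frag_map h u) = frag_lin (g \<circ> h) u"
  using subset_UNIV
  by (induction u rule: frag_induction) (simp_all add: frag_map_def frag_extend_diff)

lemma free_map_eq_frag_map: "free_map f = frag_map (\<lambda>(r, x). (r, f x))"
proof
  fix u
  have cmul_of: "frag_cmul c (frag_of p) = Poly_Mapping.single p c" for p and c :: int
    by (rule poly_mapping_eqI) (simp add: lookup_single when_def)
  show "free_map f u = frag_map (\<lambda>(r, x). (r, f x)) u"
    by (simp add: free_map_def frag_map_def frag_extend_def case_prod_beta cmul_of)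
qed

lemma lmod_add_left: "lmod s \<Longrightarrow> s (r + t) x = s r x + s t x"
  and lmod_add_right: "lmod s \<Longrightarrow> s r (x + y) = s r x + s r y"
  and lmod_mult: "lmod s \<Longrightarrow> s (r * t) x = s r (s t x)"
  by (simp_all add: lmod_def)

lemma lmod_additive: "lmod s \<Longrightarrow> additive (s r)"
  by (simp add: additive_def lmod_add_right)

lemma hom_R_additive: "g \<in> hom_R s \<Longrightarrow> additive g"
  by (simp add: hom_R_def lmod_hom_def additive_def)

lemma hom_R_mult: "g \<in> hom_R s \<Longrightarrow> g (r * x) = s r (g x)"
  by (simp add: hom_R_def lmod_hom_def)

section \<open>Tensor products with the ring\<close>

lemma tensor_rel_uminus: "a \<in> tensor_rel s \<Longrightarrow> - a \<in> tensor_rel s"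
  using tensor_rel.diff[OF tensor_rel.zero] by fastforce

lemma tensor_rel_add: "a \<in> tensor_rel s \<Longrightarrow> b \<in> tensor_rel s \<Longrightarrow> a + b \<in> tensor_rel s"
  using tensor_rel.diff[OF _ tensor_rel_uminus, of a s b] by simp

lemma tensor_rel_trans:
  "a - b \<in> tensor_rel s \<Longrightarrow> b - c \<in> tensor_rel s \<Longrightarrow> a - c \<in> tensor_rel s"
  using tensor_rel_add[of "a - b" s "b - c"] by simp

lemma tensor_rel_sym: "a - b \<in> tensor_rel s \<Longrightarrow> b - a \<in> tensor_rel s"
  using tensor_rel_uminus[of "a - b" s] by simp

lemma tensor_rel_left_0: "frag_of (0, x) \<in> tensor_rel s"
  using tensor_rel_uminus[OF tensor_rel.add_left[of 0 0 x s]] by simp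

lemma tensor_rel_right_0: "frag_of (r, 0) \<in> tensor_rel s"
  using tensor_rel_uminus[OF tensor_rel.add_right[of r 0 0 s]] by simp

lemma tensor_rel_frag_extend_cong:
  assumes "\<And>p. g p - h p \<in> tensor_rel s"
  shows "frag_extend g w - frag_extend h w \<in> tensor_rel s"
  using subset_UNIV
proof (induction w rule: frag_induction)
  case zero show ?case by (simp add: tensor_rel.zero)
next
  case (one p) show ?case by (simp add: assms)
next
  case (diff a b)
  then have "(frag_extend g a - frag_extend h a) - (frag_extend g b - frag_extend h b)
      \<in> tensor_rel s"
    by (rule tensor_rel.diff)
  then show ?case by (simp add: frag_extend_diff algebra_simps)
qed

lemma tensor_rel_frag_extend:
  assumes "\<And>p. g p \<in> tensor_rel s"
  shows "frag_extend g w \<in> tensor_rel s"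
  using tensor_rel_frag_extend_cong[of g "\<lambda>_. 0" s w] assms by (simp add: frag_extend_eq_0)

lemma tensor_rel_left_frag_lin:
  "frag_of (frag_lin h w, x) - frag_extend (\<lambda>p. frag_of (h p, x)) w \<in> tensor_rel s"
  using subset_UNIV
proof (induction w rule: frag_induction)
  case zero show ?case by (simp add: tensor_rel_left_0)
next
  case (one p) show ?case by (simp add: tensor_rel.zero)
next
  case (diff a b)
  let ?A = "frag_lin h a" and ?B = "frag_lin h b"
    and ?FA = "frag_extend (\<lambda>p. frag_of (h p, x)) a"
    and ?FB = "frag_extend (\<lambda>p. frag_of (h p, x)) b"
  have add_left: "frag_of (?A, x) - frag_of (?A - ?B, x) - frag_of (?B, x) \<in> tensor_rel s"
    using tensor_rel.add_left[of "?A - ?B" ?B x s] by simp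
  have "(frag_of (?A, x) - ?FA) - (frag_of (?B, x) - ?FB)
      - (frag_of (?A, x) - frag_of (?A - ?B, x) - frag_of (?B, x)) \<in> tensor_rel s"
    using tensor_rel.diff[OF tensor_rel.diff[OF diff] add_left] .
  then show ?case by (simp add: frag_extend_diff algebra_simps)
qed

lemma tensor_cls_eq_iff: "tensor_cls s a = tensor_cls s b \<longleftrightarrow> a - b \<in> tensor_rel s"
proof
  assume "tensor_cls s a = tensor_cls s b"
  moreover have "a \<in> tensor_cls s a"
    by (simp add: tensor_cls_def tensor_rel.zero)
  ultimately show "a - b \<in> tensor_rel s"
    by (simp add: tensor_cls_def)
next
  assume "a - b \<in> tensor_rel s"
  then show "tensor_cls s a = tensor_cls s b"
    unfolding tensor_cls_def by (meson tensor_rel_sym tensor_rel_trans)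
qed

lemma tensor_cls_some: "(SOME v. v \<in> tensor_cls s u) - u \<in> tensor_rel s"
proof -
  have "u \<in> tensor_cls s u"
    by (simp add: tensor_cls_def tensor_rel.zero)
  then have "(SOME v. v \<in> tensor_cls s u) \<in> tensor_cls s u"
    by (rule someI)
  then show ?thesis
    by (simp add: tensor_cls_def)
qed

lemma free_map_tensor_rel:
  assumes f: "lmod_hom smulL smulM f" and u: "u \<in> tensor_rel smulL"
  shows "free_map f u \<in> tensor_rel smulM"
  using u
proof (induction rule: tensor_rel.induct)
  case zero show ?case
    by (simp add: free_map_eq_frag_map frag_map_def tensor_rel.zero)
next
  case (diff a b) then show ?case
    by (simp add: free_map_eq_frag_map frag_map_diff tensor_rel.diff)
qed (use f in \<open>simp_all add: free_map_eq_frag_map frag_map_def frag_extend_diff lmod_hom_def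
      tensor_rel.intros\<close>)

lemma tensor_map_tensor_cls:
  assumes "lmod_hom smulL smulM f"
  shows "tensor_map smulM f (tensor_cls smulL u) = tensor_cls smulM (free_map f u)"
  using free_map_tensor_rel[OF assms tensor_cls_some[of smulL u]]
  by (simp add: tensor_map_def tensor_cls_eq_iff free_map_eq_frag_map frag_map_diff)

lemma bij_betw_tensor_map_if_inverse:
  assumes f: "lmod_hom smulL smulM f"
    and g_rel: "\<And>v. v \<in> tensor_rel smulM \<Longrightarrow> g v \<in> tensor_rel smulL"
    and g_free: "\<And>u. g (free_map f u) - u \<in> tensor_rel smulL"
    and free_g: "\<And>v. free_map f (g v) - v \<in> tensor_rel smulM"
  shows "bij_betw (tensor_map smulM f) (tensor smulL) (tensor smulM)"
proof (rule bij_betwI')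
  fix A B assume "A \<in> tensor smulL" "B \<in> tensor smulL"
  then obtain a b where A: "A = tensor_cls smulL a" and B: "B = tensor_cls smulL b"
    by (auto simp: tensor_def)
  show "tensor_map smulM f A = tensor_map smulM f B \<longleftrightarrow> A = B"
  proof
    assume "tensor_map smulM f A = tensor_map smulM f B"
    then have ab: "free_map f (a - b) \<in> tensor_rel smulM"
      by (simp add: A B tensor_map_tensor_cls[OF f] tensor_cls_eq_iff
          free_map_eq_frag_map frag_map_diff)
    have "g (free_map f (a - b)) - (g (free_map f (a - b)) - (a - b)) \<in> tensor_rel smulL"
      using tensor_rel.diff[OF g_rel[OF ab] g_free] .
    then show "A = B"
      by (simp add: A B tensor_cls_eq_iff)
  qed simp
next
  fix A assume "A \<in> tensor smulL"
  then show "tensor_map smulM f A \<in> tensor smulM"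
    by (auto simp: tensor_def tensor_map_tensor_cls[OF f])
next
  fix B assume "B \<in> tensor smulM"
  then obtain v where v: "B = tensor_cls smulM v"
    by (auto simp: tensor_def)
  then have "B = tensor_map smulM f (tensor_cls smulL (g v))"
    using tensor_rel_sym[OF free_g] by (simp add: tensor_map_tensor_cls[OF f] tensor_cls_eq_iff)
  then show "\<exists>A \<in> tensor smulL. B = tensor_map smulM f A"
    by (auto simp: tensor_def)
qed

section \<open>t-unital rings\<close>

definition frag_mult :: "('r::ring \<times> 'r \<Rightarrow>\<^sub>0 int) \<Rightarrow> 'r" where
  "frag_mult = frag_lin (\<lambda>(a, b). a * b)"

lemma frag_mult_add: "frag_mult (u + v) = frag_mult u + frag_mult v"
  by (simp add: frag_mult_def)

lemma frag_mult_tensor_rel: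
  "w \<in> tensor_rel ((*) :: 'r::ring \<Rightarrow> 'r \<Rightarrow> 'r) \<Longrightarrow> frag_mult w = 0"
  by (induction rule: tensor_rel.induct) (simp_all add: frag_mult_def algebra_simps)

lemma mult_map_tensor_cls: "mult_map (tensor_cls (*) w) = frag_mult w"
proof -
  have "mult_map C = frag_mult (SOME u. u \<in> C)" for C
    by (simp add: mult_map_def frag_mult_def frag_lin_def Let_def case_prod_beta)
  then have "mult_map (tensor_cls (*) w) = frag_mult (SOME u. u \<in> tensor_cls (*) w)" .
  also have "\<dots> = frag_mult w"
    using frag_mult_tensor_rel[OF tensor_cls_some[of "(*)" w]] by (simp add: frag_mult_def)
  finally show ?thesis .
qed

lemma t_unital_frag_mult_eq:
  fixes w w' :: "'r::ring \<times> 'r \<Rightarrow>\<^sub>0 int"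
  assumes "t_unital TYPE('r)" and "frag_mult w = frag_mult w'"
  shows "w - w' \<in> tensor_rel (*)"
proof -
  have "inj_on mult_map (range (tensor_cls ((*) :: 'r \<Rightarrow> 'r \<Rightarrow> 'r)))"
    using assms(1) by (simp add: t_unital_def bij_betw_def tensor_def)
  then have "tensor_cls (*) w = tensor_cls (*) w'"
    using assms(2) by (metis inj_onD mult_map_tensor_cls rangeI)
  then show ?thesis
    by (simp add: tensor_cls_eq_iff)
qed

definition factorization :: "'r::ring \<Rightarrow> ('r \<times> 'r \<Rightarrow>\<^sub>0 int)" where
  "factorization r = (SOME w. frag_mult w = r)"

lemma frag_mult_factorization:
  assumes "t_unital TYPE('r::ring)"
  shows "frag_mult (factorization r) = (r :: 'r)"
proof -
  have "r \<in> mult_map ` range (tensor_cls ((*) :: 'r \<Rightarrow> 'r \<Rightarrow> 'r))"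
    using assms by (simp add: t_unital_def bij_betw_def tensor_def)
  then have "\<exists>w. frag_mult w = r"
    by (auto simp: mult_map_tensor_cls)
  then show ?thesis
    unfolding factorization_def by (rule someI_ex)
qed

lemma factorization_add:
  assumes "t_unital TYPE('r::ring)"
  shows "factorization (r + s) - (factorization r + factorization s)
    \<in> tensor_rel ((*) :: 'r \<Rightarrow> 'r \<Rightarrow> 'r)"
  using assms by (simp add: t_unital_frag_mult_eq frag_mult_add frag_mult_factorization)

lemma factorization_mult_left:
  assumes "t_unital TYPE('r::ring)"
  shows "factorization (r * s) - frag_map (\<lambda>(a, b). (r * a, b)) (factorization s)
    \<in> tensor_rel ((*) :: 'r \<Rightarrow> 'r \<Rightarrow> 'r)"
proof (rule t_unital_frag_mult_eq[OF assms])
  have "additive ((*) r)"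
    by standard (rule distrib_left)
  then have "frag_mult (frag_map (\<lambda>(a, b). (r * a, b)) (factorization s))
      = r * frag_mult (factorization s)"
    by (simp add: frag_mult_def frag_lin_frag_map additive_comp_frag_lin comp_def case_prod_beta
        mult.assoc)
  then show "frag_mult (factorization (r * s))
      = frag_mult (frag_map (\<lambda>(a, b). (r * a, b)) (factorization s))"
    by (simp add: frag_mult_factorization[OF assms])
qed

lemma factorization_mult_right:
  assumes "t_unital TYPE('r::ring)"
  shows "factorization (r * s) - frag_map (\<lambda>(a, b). (a, b * s)) (factorization r)
    \<in> tensor_rel ((*) :: 'r \<Rightarrow> 'r \<Rightarrow> 'r)"
proof (rule t_unital_frag_mult_eq[OF assms])
  have "additive (\<lambda>x. x * s)"
    by standard (rule distrib_right)
  then have "frag_mult (frag_map (\<lambda>(a, b). (a, b * s)) (factorization r))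
      = frag_mult (factorization r) * s"
    using additive_comp_frag_lin[of "\<lambda>x. x * s" "\<lambda>(a, b). a * b" "factorization r"]
    by (simp add: frag_mult_def frag_lin_frag_map comp_def split_beta' mult.assoc)
  then show "frag_mult (factorization (r * s))
      = frag_mult (frag_map (\<lambda>(a, b). (a, b * s)) (factorization r))"
    by (simp add: frag_mult_factorization[OF assms])
qed

lemma tensor_rel_factorization:
  assumes "t_unital TYPE('r::ring)"
  shows "frag_extend (\<lambda>(a, b). frag_of (a, smul b x)) (factorization r) - frag_of (r, x)
    \<in> tensor_rel (smul :: 'r \<Rightarrow> 'm::ab_group_add \<Rightarrow> 'm)"
proof -
  have "frag_extend (\<lambda>(a, b). frag_of (a, smul b x)) (factorization r)
      - frag_extend (\<lambda>(a, b). frag_of (a * b, x)) (factorization r) \<in> tensor_rel smul"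
    by (rule tensor_rel_frag_extend_cong)
      (simp add: split_beta' tensor_rel_sym[OF tensor_rel.balanced])
  moreover have "frag_extend (\<lambda>(a, b). frag_of (a * b, x)) (factorization r) - frag_of (r, x)
      \<in> tensor_rel smul"
    using tensor_rel_sym[OF tensor_rel_left_frag_lin[of "\<lambda>(a, b). a * b" "factorization r" x smul]]
    by (simp add: frag_mult_factorization[OF assms, unfolded frag_mult_def split_beta'] split_beta')
  ultimately show ?thesis
    by (rule tensor_rel_trans)
qed

lemma tensor_rel_null:
  assumes "t_unital TYPE('r::ring)" and null: "\<And>s. smul s x = 0"
  shows "frag_of (r, x) \<in> tensor_rel (smul :: 'r \<Rightarrow> 'm::ab_group_add \<Rightarrow> 'm)"
proof -
  have "frag_extend (\<lambda>(a, b). frag_of (a, smul b x)) (factorization r) \<in> tensor_rel smul"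
    by (rule tensor_rel_frag_extend) (simp add: split_beta null tensor_rel_right_0)
  from tensor_rel.diff[OF this tensor_rel_factorization[OF assms(1), of smul x r]]
  show ?thesis
    by simp
qed

lemma hom_R_factorization:
  assumes "t_unital TYPE('r::ring)" and g: "g \<in> hom_R s"
  shows "g r = frag_lin (\<lambda>(a, b). s a (g b)) (factorization (r :: 'r))"
proof -
  have "g r = g (frag_lin (\<lambda>(a, b). a * b) (factorization r))"
    using frag_mult_factorization[OF assms(1)] by (simp add: frag_mult_def)
  also have "\<dots> = frag_lin (\<lambda>(a, b). s a (g b)) (factorization r)"
    by (simp add: additive_comp_frag_lin[OF hom_R_additive[OF g]] hom_R_mult[OF g] split_beta')
  finally show ?thesis .
qed

section \<open>Morphisms with null kernel and cokernel\<close>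

locale null_ker_coker_hom =
  fixes smulL :: "'r::ring \<Rightarrow> 'l::ab_group_add \<Rightarrow> 'l"
    and smulM :: "'r \<Rightarrow> 'm::ab_group_add \<Rightarrow> 'm"
    and f :: "'l \<Rightarrow> 'm"
  assumes t_unital: "t_unital TYPE('r)"
    and lmod_L: "lmod smulL" and lmod_M: "lmod smulM"
    and hom: "lmod_hom smulL smulM f"
    and kernel_null: "kernel_null smulL f"
    and cokernel_null: "cokernel_null smulM f"
begin

lemma f_additive: "additive f"
  using hom by (simp add: lmod_hom_def additive_def)

lemma f_smul: "f (smulL r x) = smulM r (f x)"
  using hom by (simp add: lmod_hom_def)

lemma smulL_same_image:
  assumes "f x = f y"
  shows "smulL r x = smulL r y"
proof -
  have "f (x - y) = 0"
    using assms by (simp add: additive.diff[OF f_additive])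
  then have "smulL r (x - y) = 0"
    using kernel_null by (simp add: kernel_null_def)
  then show ?thesis
    by (simp add: additive.diff[OF lmod_additive[OF lmod_L]])
qed

lemma tensor_rel_same_image:
  assumes "f x = f y"
  shows "frag_of (a, x) - frag_of (a, y) \<in> tensor_rel smulL"
proof -
  have "frag_of (a, x - y) \<in> tensor_rel smulL"
    using smulL_same_image[OF assms] t_unital
    by (intro tensor_rel_null) (simp_all add: additive.diff[OF lmod_additive[OF lmod_L]])
  from tensor_rel_add[OF tensor_rel.add_right[of a y "x - y"] this] show ?thesis
    by simp
qed

lemma tensor_rel_image_add:
  assumes "f x = f y + f z"
  shows "frag_of (a, x) - (frag_of (a, y) + frag_of (a, z)) \<in> tensor_rel smulL"
proof -
  have "frag_of (a, x) - frag_of (a, y + z) \<in> tensor_rel smulL"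
    using assms by (intro tensor_rel_same_image) (simp add: additive.add[OF f_additive])
  from tensor_rel_add[OF this tensor_rel.add_right[of a y z]] show ?thesis
    by (simp add: algebra_simps)
qed

definition lift :: "'m \<Rightarrow> 'l" where
  "lift y = (SOME x. f x = y)"

lemma f_lift: "y \<in> range f \<Longrightarrow> f (lift y) = y"
  unfolding lift_def by (metis (mono_tags) rangeE someI)

lemma f_lift_smul: "f (lift (smulM r y)) = smulM r y"
  using cokernel_null by (simp add: cokernel_null_def f_lift)

definition lift_scaled :: "'m \<Rightarrow> ('r \<times> 'r \<Rightarrow>\<^sub>0 int) \<Rightarrow> ('r \<times> 'l \<Rightarrow>\<^sub>0 int)"
  where
  "lift_scaled y = frag_extend (\<lambda>(a, b). frag_of (a, lift (smulM b y)))"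

lemma lift_scaled_diff: "lift_scaled y (u - v) = lift_scaled y u - lift_scaled y v"
  by (simp add: lift_scaled_def frag_extend_diff)

lemma lift_scaled_tensor_rel:
  assumes "w \<in> tensor_rel ((*) :: 'r \<Rightarrow> 'r \<Rightarrow> 'r)"
  shows "lift_scaled y w \<in> tensor_rel smulL"
  using assms
proof (induction rule: tensor_rel.induct)
  case zero show ?case
    by (simp add: lift_scaled_def tensor_rel.zero)
next
  case (diff a b) then show ?case
    by (simp add: lift_scaled_diff tensor_rel.diff)
next
  case (add_left r s x) show ?case
    by (simp add: lift_scaled_def frag_extend_diff tensor_rel.add_left)
next
  case (add_right r x x')
  have "f (lift (smulM (x + x') y)) = f (lift (smulM x y)) + f (lift (smulM x' y))"
    unfolding f_lift_smul by (rule lmod_add_left[OF lmod_M])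
  then show ?case
    by (simp add: lift_scaled_def frag_extend_diff frag_extend_add tensor_rel_image_add
        diff_diff_eq)
next
  case (balanced r s x)
  have "frag_of (r, smulL s (lift (smulM x y))) - frag_of (r, lift (smulM (s * x) y))
      \<in> tensor_rel smulL"
    by (rule tensor_rel_same_image) (simp add: f_smul f_lift_smul lmod_mult[OF lmod_M])
  from tensor_rel_trans[OF tensor_rel.balanced this] show ?case
    by (simp add: lift_scaled_def frag_extend_diff)
qed

lemma lift_scaled_add:
  "lift_scaled (y + y') w - (lift_scaled y w + lift_scaled y' w) \<in> tensor_rel smulL"
proof -
  have "frag_of (a, lift (smulM b (y + y')))
      - (frag_of (a, lift (smulM b y)) + frag_of (a, lift (smulM b y')))
      \<in> tensor_rel smulL" for a b
    by (rule tensor_rel_image_add) (unfold f_lift_smul, rule lmod_add_right[OF lmod_M])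
  then show ?thesis
    unfolding lift_scaled_def frag_extend_add_fun[symmetric]
    by (intro tensor_rel_frag_extend_cong) (simp add: split_paired_all)
qed

definition free_map_inv :: "('r \<times> 'm \<Rightarrow>\<^sub>0 int) \<Rightarrow> ('r \<times> 'l \<Rightarrow>\<^sub>0 int)"
  where
  "free_map_inv = frag_extend (\<lambda>(r, y). lift_scaled y (factorization r))"

lemma free_map_inv_tensor_rel:
  assumes "v \<in> tensor_rel smulM"
  shows "free_map_inv v \<in> tensor_rel smulL"
  using assms
proof (induction rule: tensor_rel.induct)
  case zero show ?case
    by (simp add: free_map_inv_def tensor_rel.zero)
next
  case (diff a b) then show ?case
    by (simp add: free_map_inv_def frag_extend_diff tensor_rel.diff)
next
  case (add_left r s y)
  from lift_scaled_tensor_rel[OF factorization_add[OF t_unital, of r s]] show ?case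
    by (simp add: free_map_inv_def frag_extend_diff lift_scaled_diff lift_scaled_def frag_extend_add
        diff_diff_eq)
next
  case (add_right r y y')
  from lift_scaled_add[of y y' "factorization r"] show ?case
    by (simp add: free_map_inv_def frag_extend_diff frag_extend_add diff_diff_eq)
next
  case (balanced r s y)
  have "lift_scaled y (frag_map (\<lambda>(a, b). (a, b * s)) (factorization r))
      = lift_scaled (smulM s y) (factorization r)"
    by (simp add: lift_scaled_def frag_extend_frag_map comp_def split_beta' lmod_mult[OF lmod_M])
  with lift_scaled_tensor_rel[OF factorization_mult_right[OF t_unital, of r s], of y] show ?case
    by (simp add: free_map_inv_def lift_scaled_diff frag_extend_diff)
qed

lemma free_map_inv_free_map: "free_map_inv (free_map f u) - u \<in> tensor_rel smulL"
proof -
  have "lift_scaled (f x) (factorization r) - frag_of (r, x) \<in> tensor_rel smulL" for r x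
  proof -
    have "lift_scaled (f x) (factorization r)
        - frag_extend (\<lambda>(a, b). frag_of (a, smulL b x)) (factorization r) \<in> tensor_rel smulL"
      unfolding lift_scaled_def
      by (rule tensor_rel_frag_extend_cong)
        (simp add: split_beta tensor_rel_same_image f_lift_smul f_smul)
    from tensor_rel_trans[OF this tensor_rel_factorization[OF t_unital]] show ?thesis .
  qed
  then have "frag_extend (\<lambda>(r, x). lift_scaled (f x) (factorization r)) u - frag_extend frag_of u
      \<in> tensor_rel smulL"
    by (intro tensor_rel_frag_extend_cong) (simp add: split_paired_all)
  then show ?thesis
    by (simp add: free_map_inv_def free_map_eq_frag_map frag_extend_frag_map comp_def split_beta'
        flip: frag_expansion)
qed

lemma free_map_free_map_inv: "free_map f (free_map_inv v) - v \<in> tensor_rel smulM"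
proof -
  have "free_map f (lift_scaled y w) = frag_extend (\<lambda>(a, b). frag_of (a, smulM b y)) w" for y w
    by (simp add: free_map_eq_frag_map frag_map_def lift_scaled_def frag_extend_frag_extend
        split_beta split_beta' f_lift_smul)
  then have "free_map f (free_map_inv v)
      = frag_extend (\<lambda>(r, y). frag_extend (\<lambda>(a, b). frag_of (a, smulM b y)) (factorization r))
          v"
    by (simp add: free_map_inv_def free_map_eq_frag_map frag_map_def frag_extend_frag_extend
        split_beta')
  moreover have "\<dots> - frag_extend frag_of v \<in> tensor_rel smulM"
    by (rule tensor_rel_frag_extend_cong)
      (simp add: split_paired_all tensor_rel_factorization[OF t_unital])
  ultimately show ?thesis
    by (simp flip: frag_expansion)
qed

theorem bij_betw_tensor_map: "bij_betw (tensor_map smulM f) (tensor smulL) (tensor smulM)"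
  using hom free_map_inv_tensor_rel free_map_inv_free_map free_map_free_map_inv
  by (rule bij_betw_tensor_map_if_inverse)

lemma f_lift_hom_R:
  assumes g: "g \<in> hom_R smulM"
  shows "f (lift (g r)) = g r"
proof (rule f_lift)
  have "g r
      = frag_lin (\<lambda>p. f (lift (case p of (a, b) \<Rightarrow> smulM a (g b)))) (factorization r)"
    by (simp add: hom_R_factorization[OF t_unital g, of r] f_lift_smul split_beta')
  with frag_lin_in_range[OF f_additive] show "g r \<in> range f"
    by simp
qed

lemma frag_lin_lift_tensor_rel:
  assumes g: "g \<in> hom_R smulM" and w: "w \<in> tensor_rel ((*) :: 'r \<Rightarrow> 'r \<Rightarrow> 'r)"
  shows "frag_lin (\<lambda>(a, b). smulL a (lift (g b))) w = 0"
  using w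
proof (induction rule: tensor_rel.induct)
  case (add_right r x y)
  have "smulL r (lift (g (x + y))) = smulL r (lift (g x) + lift (g y))"
    by (rule smulL_same_image)
      (unfold additive.add[OF f_additive] f_lift_hom_R[OF g],
        rule additive.add[OF hom_R_additive[OF g]])
  then show ?case
    by (simp add: lmod_add_right[OF lmod_L])
next
  case (balanced r s x)
  have "smulL r (lift (g (s * x))) = smulL r (smulL s (lift (g x)))"
    by (rule smulL_same_image) (simp add: f_smul f_lift_hom_R[OF g] hom_R_mult[OF g] f_lift_smul)
  then show ?case
    by (simp add: lmod_mult[OF lmod_L])
qed (simp_all add: lmod_add_left[OF lmod_L])

definition hom_lift :: "('r \<Rightarrow> 'm) \<Rightarrow> 'r \<Rightarrow> 'l" where
  "hom_lift g r = frag_lin (\<lambda>(a, b). smulL a (lift (g b))) (factorization r)"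

lemma hom_lift_hom_R:
  assumes g: "g \<in> hom_R smulM"
  shows "hom_lift g \<in> hom_R smulL"
  unfolding hom_R_def lmod_hom_def
proof (intro CollectI conjI allI)
  fix x y
  from frag_lin_lift_tensor_rel[OF g factorization_add[OF t_unital, of x y]]
  show "hom_lift g (x + y) = hom_lift g x + hom_lift g y"
    by (simp add: hom_lift_def)
next
  fix r x
  have "hom_lift g (r * x)
      = frag_lin (\<lambda>(a, b). smulL a (lift (g b)))
          (frag_map (\<lambda>(a, b). (r * a, b)) (factorization x))"
    using frag_lin_lift_tensor_rel[OF g factorization_mult_left[OF t_unital, of r x]]
    by (simp add: hom_lift_def)
  also have "\<dots> = smulL r (hom_lift g x)"
    by (simp add: hom_lift_def frag_lin_frag_map comp_def split_beta' lmod_mult[OF lmod_L]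
        additive_comp_frag_lin[OF lmod_additive[OF lmod_L]])
  finally show "hom_lift g (r * x) = smulL r (hom_lift g x)" .
qed

lemma f_hom_lift:
  assumes g: "g \<in> hom_R smulM"
  shows "f (hom_lift g r) = g r"
  by (simp add: hom_lift_def additive_comp_frag_lin[OF f_additive] split_beta' f_smul
      f_lift_hom_R[OF g] hom_R_factorization[OF t_unital g, of r])

lemma comp_hom_R: "g \<in> hom_R smulL \<Longrightarrow> f \<circ> g \<in> hom_R smulM"
  using hom by (simp add: hom_R_def lmod_hom_def)

lemma hom_R_comp_eqD:
  assumes g: "g \<in> hom_R smulL" and g': "g' \<in> hom_R smulL" and eq: "f \<circ> g = f \<circ> g'"
  shows "g = g'"
proof
  fix r
  have "smulL a (g b) = smulL a (g' b)" for a b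
    using fun_cong[OF eq, of b] by (intro smulL_same_image) simp
  then show "g r = g' r"
    by (simp add: hom_R_factorization[OF t_unital g, of r]
        hom_R_factorization[OF t_unital g', of r])
qed

theorem bij_betw_comp_hom_R: "bij_betw (\<lambda>g. f \<circ> g) (hom_R smulL) (hom_R smulM)"
proof (rule bij_betwI')
  fix g g' assume "g \<in> hom_R smulL" "g' \<in> hom_R smulL"
  then show "f \<circ> g = f \<circ> g' \<longleftrightarrow> g = g'"
    using hom_R_comp_eqD by blast
next
  fix g assume "g \<in> hom_R smulL"
  then show "f \<circ> g \<in> hom_R smulM"
    by (rule comp_hom_R)
next
  fix g' assume g': "g' \<in> hom_R smulM"
  have "g' = f \<circ> hom_lift g'"
    by (simp add: fun_eq_iff f_hom_lift[OF g'])
  with hom_lift_hom_R[OF g'] show "\<exists>g \<in> hom_R smulL. g' = f \<circ> g"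
    by blast
qed

end

theorem proposition5p6:
  fixes smulL :: "'r::ring \<Rightarrow> 'l::ab_group_add \<Rightarrow> 'l"
    and smulM :: "'r \<Rightarrow> 'm::ab_group_add \<Rightarrow> 'm"
    and f :: "'l \<Rightarrow> 'm"
  assumes "t_unital TYPE('r)"
    and "lmod smulL" and "lmod smulM"
    and "lmod_hom smulL smulM f"
    and "kernel_null smulL f"
    and "cokernel_null smulM f"
  shows "bij_betw (tensor_map smulM f) (tensor smulL) (tensor smulM) \<and>
         bij_betw (\<lambda>g. f \<circ> g) (hom_R smulL) (hom_R smulM)"
proof -
  interpret null_ker_coker_hom smulL smulM f
    using assms by unfold_locales
  show ?thesis
    using bij_betw_tensor_map bij_betw_comp_hom_R by blast
qed

end
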